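(* Fix $0<b_1<b_2<1$ and an integer $N\ge1$. Let $\{\chi_t(x)\}$ and $\{j_t(x)\}$, $(x,t)\in\mathbb Z\times\{1,\dots,N\}$, be mutually independent, with $P[\chi_t(x)=1]=b_1=1-P[\chi_t(x)=0]$ and $P[j_t(x)=r]=(1-b_2)b_2^{r-1}$ for $r\ge1$. Call an integer $k$ separating if, for each $t\in[1,N]$, $\chi_t(k+t)=0$ and $\max_{m<k+t}(j_t(m)+m)\le k+t$. Then almost surely there exists a doubly infinite sequence of integers $\cdots<R_{-1}<R_0<R_1<\cdots$ such that every $R_i$ is separating. *)

theory Defs
  imports "HOL-Probability.Probability"
begin

definition separating ::
  "nat \<Rightarrow> (int \<Rightarrow> nat \<Rightarrow> 'a \<Rightarrow> nat) \<Rightarrow> (int \<Rightarrow> nat \<Rightarrow> 'a \<Rightarrow> nat) \<Rightarrow> 'a \<Rightarrow> int \<Rightarrow> bool"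
where
  "separating N chi j w k \<longleftrightarrow>
     (\<forall>t\<in>{1..N}. chi (k + int t) t w = 0 \<and>
        (\<forall>m < k + int t. int (j m t w) + m \<le> k + int t))"

end

theory Submission
  imports Defs "HOL-Probability.Probability"
begin

text \<open>Call [K - L, K + N] a window. The event that \<open>chi\<close> vanishes at the sites (K + t, t)
  and that no jump starting inside the window overshoots K + t depends only on the finitely many
  variables indexed by the window, and by independence its probability is at least
  \<open>(1 - b1)\<^sup>N \<Prod>\<^sub>d (1 - b2\<^sup>d)\<^sup>N\<close>, uniformly in K and L. A jump starting left of the
  window overshoots with probability \<open>O(b2\<^sup>L)\<close>. Along pairwise disjoint windows with
  L growing linearly, the window events are independent with probabilities bounded away from 0,
  so infinitely many of them occur almost surely (Borel's zero-one law), while by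
  Borel--Cantelli only finitely many long overshoots occur. Hence almost surely infinitely many
  window centres are separating; windows running off to \<open>+\<infinity>\<close> and to \<open>-\<infinity>\<close> give the
  doubly infinite sequence.\<close>

lemma sum_geometric_pmf_atLeastAtMost:
  fixes b :: real
  shows "(\<Sum>r\<in>{1..d}. (1 - b) * b ^ (r - 1)) = 1 - b ^ d"
proof (induction d)
  case (Suc d)
  have "{1..Suc d} = insert (Suc d) {1..d}" by auto
  then show ?case using Suc by (simp add: algebra_simps)
qed simp

lemma exp_neg_le_one_minus:
  fixes y :: real
  assumes "0 \<le> y" "y < 1"
  shows "exp (- (y / (1 - y))) \<le> 1 - y"
proof -
  have "1 / (1 - y) = 1 + y / (1 - y)" using assms by (simp add: field_simps)
  also have "\<dots> \<le> exp (y / (1 - y))" by (rule exp_ge_add_one_self)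
  finally show ?thesis using assms by (simp add: exp_minus field_simps)
qed

lemma sum_power_atLeast1_le:
  fixes x :: real
  assumes "0 \<le> x" "x < 1"
  shows "(\<Sum>d\<in>{1..n}. x ^ d) \<le> x / (1 - x)"
proof (cases "n = 0")
  case False
  then have "(1 - x) * (\<Sum>d\<in>{1..n}. x ^ d) = x - x ^ Suc n"
    using sum_gp_multiplied[of 1 n x] by simp
  also have "\<dots> \<le> x" using assms by simp
  finally show ?thesis using assms by (simp add: field_simps mult.commute)
qed (use assms in simp)

lemma exp_le_prod_one_minus_power:
  fixes x :: real
  assumes "0 \<le> x" "x < 1"
  shows "exp (- (x / (1 - x) ^ 2)) \<le> (\<Prod>d\<in>{1..n}. 1 - x ^ d)"
proof -
  have "exp (- (x / (1 - x) ^ 2)) \<le> exp (- ((\<Sum>d\<in>{1..n}. x ^ d) / (1 - x)))"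
    using sum_power_atLeast1_le[OF assms, of n] assms
    by (simp add: power2_eq_square divide_right_mono flip: divide_divide_eq_left)
  also have "\<dots> = (\<Prod>d\<in>{1..n}. exp (- (x ^ d / (1 - x))))"
    by (simp add: exp_sum sum_divide_distrib flip: sum_negf)
  also have "\<dots> \<le> (\<Prod>d\<in>{1..n}. 1 - x ^ d)"
  proof (rule prod_mono)
    fix d :: nat assume "d \<in> {1..n}"
    then have xd: "0 \<le> x ^ d" "x ^ d \<le> x"
      using assms by (auto simp: power_le_one intro: power_decreasing[of 1 d x, simplified])
    then have "x ^ d / (1 - x) \<ge> x ^ d / (1 - x ^ d)"
      using assms by (intro divide_left_mono) auto
    then have "exp (- (x ^ d / (1 - x))) \<le> exp (- (x ^ d / (1 - x ^ d)))" by simp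
    also have "\<dots> \<le> 1 - x ^ d" using xd assms by (intro exp_neg_le_one_minus) auto
    finally show "0 \<le> exp (- (x ^ d / (1 - x))) \<and> exp (- (x ^ d / (1 - x))) \<le> 1 - x ^ d"
      by simp
  qed
  finally show ?thesis .
qed

lemma (in prob_space) AE_infinite_indep_events:
  fixes A :: "nat \<Rightarrow> 'a set"
  assumes indep: "indep_events A UNIV" and c: "0 < c" "\<And>i. c \<le> prob (A i)"
  shows "AE w in M. infinite {i. w \<in> A i}"
proof -
  let ?T = "\<lambda>n. \<Union>m\<in>{n..}. A m"
  have ev: "range A \<subseteq> events" using indep by (simp add: indep_events_def subset_eq)
  then have Tev: "?T n \<in> events" for n by auto
  have "(\<lambda>n. prob (?T n)) \<longlonglongrightarrow> prob (\<Inter>n. ?T n)"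
    by (rule finite_Lim_measure_decseq) (use Tev in \<open>auto simp: decseq_def intro: order_trans\<close>)
  moreover have "c \<le> prob (?T n)" for n
    using c(2)[of n] finite_measure_mono[of "A n" "?T n"] Tev by fastforce
  ultimately have "c \<le> prob (\<Inter>n. ?T n)" by (intro LIMSEQ_le_const) auto
  then have "prob (\<Inter>n. ?T n) = 1" using borel_0_1_law[OF indep] c(1) by auto
  then have "AE w in M. w \<in> (\<Inter>n. ?T n)" using Tev by (subst (asm) prob_eq_1) auto
  then show ?thesis by eventually_elim (auto simp: infinite_nat_iff_unbounded_le)
qed

lemma strict_mono_int_Suc:
  fixes R :: "int \<Rightarrow> 'a::order"
  assumes step: "\<And>i. R i < R (i + 1)"
  shows "strict_mono R"
proof (rule strict_monoI)
  fix a b :: int assume "a < b"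
  have "R a < R (a + 1 + int n)" for n
  proof (induction n)
    case (Suc n)
    then show ?case using step[of "a + 1 + int n"] by (simp add: add.assoc)
  qed (simp add: step)
  from this[of "nat (b - a - 1)"] show "R a < R b" using \<open>a < b\<close> by simp
qed

lemma strict_mono_int_enumeration:
  fixes S :: "int set"
  assumes up: "\<And>b. \<exists>k\<in>S. b < k" and down: "\<And>b. \<exists>k\<in>S. k < b"
  shows "\<exists>R :: int \<Rightarrow> int. strict_mono R \<and> range R \<subseteq> S"
proof -
  obtain next_up where next_up: "\<And>b. next_up b \<in> S \<and> b < next_up b"
    using up by metis
  obtain next_down where next_down: "\<And>b. next_down b \<in> S \<and> next_down b < b"
    using down by metis
  obtain s where s: "s \<in> S" using up by blast
  define R where "R i = (if 0 \<le> i then (next_up ^^ nat i) s else (next_down ^^ nat (- i)) s)" for i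
  have "(next_up ^^ n) s \<in> S" "(next_down ^^ n) s \<in> S" for n
    by (cases n; use s next_up next_down in simp)+
  then have "range R \<subseteq> S" by (auto simp: R_def)
  moreover have "R i < R (i + 1)" for i
  proof (cases "0 \<le> i")
    case True
    then have "R (i + 1) = next_up (R i)" by (simp add: R_def nat_add_distrib)
    then show ?thesis using next_up by simp
  next
    case False
    then have "nat (- i) = Suc (nat (- (i + 1)))" by simp
    then have "R i = next_down (R (i + 1))"
      using False by (cases "i = -1") (simp_all add: R_def)
    then show ?thesis using next_down by simp
  qed
  then have "strict_mono R" by (rule strict_mono_int_Suc)
  ultimately show ?thesis by blast
qed

lemma disjoint_family_atLeastAtMost_chain:
  fixes lo hi :: "nat \<Rightarrow> 'a::linorder"
  assumes lo_hi: "\<And>i. lo i \<le> hi i" and hi_lo: "\<And>i. hi i < lo (Suc i)"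
  shows "disjoint_family (\<lambda>i. {lo i..hi i})"
proof -
  have "strict_mono lo"
    using lo_hi hi_lo by (intro strict_monoI_Suc) (rule le_less_trans)
  then have "hi i < lo i'" if "i < i'" for i i'
    using hi_lo[of i] strict_mono_less_eq[of lo "Suc i" i'] that by fastforce
  then show ?thesis
    unfolding disjoint_family_on_def by (metis disjoint_iff atLeastAtMost_iff leD linorder_neqE order.trans)
qed

lemma disjoint_family_quadratic_windows:
  "disjoint_family (\<lambda>i. {int i * (int i + int N)..int i * (int i + int N) + int i + int N})"
  by (rule disjoint_family_atLeastAtMost_chain) (simp_all add: algebra_simps)

locale separation_model = prob_space M for M :: "'a measure" +
  fixes b1 b2 :: real and N :: nat and chi j :: "int \<Rightarrow> nat \<Rightarrow> 'a \<Rightarrow> nat"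
  assumes b1_pos: "0 < b1" and b1_less_b2: "b1 < b2" and b2_less_1: "b2 < 1" and N_pos: "N \<ge> 1"
    and indep: "indep_vars (\<lambda>_. count_space UNIV)
           (case_sum (\<lambda>(x, t). chi x t) (\<lambda>(x, t). j x t))
           ((UNIV \<times> {1..N}) <+> (UNIV \<times> {1..N}))"
    and chi_distr: "\<forall>x. \<forall>t\<in>{1..N}. measure M {w \<in> space M. chi x t w = 1} = b1
                       \<and> measure M {w \<in> space M. chi x t w = 0} = 1 - b1"
    and j_distr: "\<forall>x. \<forall>t\<in>{1..N}. \<forall>r::nat. r \<ge> 1 \<longrightarrow>
           measure M {w \<in> space M. j x t w = r} = (1 - b2) * b2 ^ (r - 1)"
begin

definition noise :: "(int \<times> nat) + (int \<times> nat) \<Rightarrow> 'a \<Rightarrow> nat" where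
  "noise = case_sum (\<lambda>(x, t). chi x t) (\<lambda>(x, t). j x t)"

definition sites :: "((int \<times> nat) + (int \<times> nat)) set" where
  "sites = (UNIV \<times> {1..N}) <+> (UNIV \<times> {1..N})"

definition noise_events :: "(int \<times> nat) + (int \<times> nat) \<Rightarrow> 'a set set" where
  "noise_events v = {noise v -` A \<inter> space M | A. A \<in> sets (count_space UNIV)}"

lemma indep_noise_events: "indep_sets noise_events sites"
  using indep unfolding indep_vars_def2 noise_def sites_def noise_events_def by simp

lemma Int_stable_noise_events: "Int_stable (noise_events v)"
  unfolding Int_stable_def noise_events_def
proof (safe intro!: CollectI)
  fix A B :: "nat set"
  show "\<exists>C. (noise v -` A \<inter> space M) \<inter> (noise v -` B \<inter> space M) = noise v -` C \<inter> space M
      \<and> C \<in> sets (count_space UNIV)"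
    by (intro exI[of _ "A \<inter> B"]) auto
qed

lemma Collect_noise_in_noise_events: "{w \<in> space M. P (noise v w)} \<in> noise_events v"
  unfolding noise_events_def by (intro CollectI exI[of _ "{r. P r}"]) auto

lemma noise_events_sets: "v \<in> sites \<Longrightarrow> E \<in> noise_events v \<Longrightarrow> E \<in> events"
  using indep_noise_events unfolding indep_sets_def by blast

lemma Collect_j_events:
  assumes "t \<in> {1..N}" shows "{w \<in> space M. P (j x t w)} \<in> events"
proof (rule noise_events_sets)
  show "Inr (x, t) \<in> sites" using assms by (auto simp: sites_def)
  show "{w \<in> space M. P (j x t w)} \<in> noise_events (Inr (x, t))"
    using Collect_noise_in_noise_events[of P "Inr (x, t)"] by (simp add: noise_def)
qed

lemma b2_pos: "0 < b2"
  using b1_pos b1_less_b2 by simp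

lemma prob_j_le: "t \<in> {1..N} \<Longrightarrow> 1 - b2 ^ d \<le> prob {w \<in> space M. j x t w \<le> d}"
proof -
  assume t: "t \<in> {1..N}"
  have "1 - b2 ^ d = (\<Sum>r\<in>{1..d}. prob {w \<in> space M. j x t w = r})"
    unfolding sum_geometric_pmf_atLeastAtMost[symmetric] using j_distr t by (intro sum.cong) auto
  also have "\<dots> = prob (\<Union>r\<in>{1..d}. {w \<in> space M. j x t w = r})"
    by (rule finite_measure_finite_Union[symmetric])
       (auto simp: disjoint_family_on_def intro!: Collect_j_events t)
  also have "\<dots> \<le> prob {w \<in> space M. j x t w \<le> d}"
    by (rule finite_measure_mono) (auto intro!: Collect_j_events t)
  finally show ?thesis .
qed

lemma prob_j_greater: "t \<in> {1..N} \<Longrightarrow> prob {w \<in> space M. d < j x t w} \<le> b2 ^ d"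
proof -
  assume t: "t \<in> {1..N}"
  have "{w \<in> space M. d < j x t w} = space M - {w \<in> space M. j x t w \<le> d}" by auto
  then show ?thesis
    using prob_compl[OF Collect_j_events[OF t], of "\<lambda>r. r \<le> d" x] prob_j_le[OF t, of d x]
    by simp
qed

definition window_event :: "int \<Rightarrow> nat \<Rightarrow> 'a set" where
  "window_event K L = {w \<in> space M. \<forall>t\<in>{1..N}. chi (K + int t) t w = 0 \<and>
     (\<forall>m\<in>{K - int L..<K + int t}. int (j m t w) + m \<le> K + int t)}"

definition window_sites :: "int \<Rightarrow> nat \<Rightarrow> ((int \<times> nat) + (int \<times> nat)) set" where
  "window_sites K L = (\<lambda>t. Inl (K + int t, t)) ` {1..N} \<union>
     (\<lambda>(t, m). Inr (m, t)) ` (SIGMA t:{1..N}. {K - int L..<K + int t})"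

definition site_constraint :: "int \<Rightarrow> (int \<times> nat) + (int \<times> nat) \<Rightarrow> 'a set" where
  "site_constraint K v = {w \<in> space M.
     (case v of Inl _ \<Rightarrow> noise v w = 0 | Inr (m, t) \<Rightarrow> int (noise v w) + m \<le> K + int t)}"

lemma window_sites_subset: "window_sites K L \<subseteq> {v \<in> sites. case_sum fst fst v \<in> {K - int L..K + int N}}"
  unfolding window_sites_def sites_def by auto

lemma finite_window_sites: "finite (window_sites K L)"
  unfolding window_sites_def by auto

lemma window_sites_nonempty: "window_sites K L \<noteq> {}"
  using N_pos unfolding window_sites_def by auto

lemma site_constraint_in_noise_events: "site_constraint K v \<in> noise_events v"
  using Collect_noise_in_noise_events[of
      "\<lambda>r. case v of Inl _ \<Rightarrow> r = 0 | Inr (m, t) \<Rightarrow> int r + m \<le> K + int t" v]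
  unfolding site_constraint_def by (simp split: sum.split)

lemma window_event_eq_INT: "window_event K L = (\<Inter>v\<in>window_sites K L. site_constraint K v)"
proof (intro set_eqI iffI)
  fix w assume "w \<in> window_event K L"
  then show "w \<in> (\<Inter>v\<in>window_sites K L. site_constraint K v)"
    by (auto simp: window_event_def window_sites_def site_constraint_def noise_def)
next
  fix w assume w: "w \<in> (\<Inter>v\<in>window_sites K L. site_constraint K v)"
  have "w \<in> space M"
    using w window_sites_nonempty by (auto simp: site_constraint_def)
  moreover have "chi (K + int t) t w = 0" if "t \<in> {1..N}" for t
  proof -
    have "Inl (K + int t, t) \<in> window_sites K L" using that by (auto simp: window_sites_def)
    then show ?thesis using w by (auto simp: site_constraint_def noise_def)
  qed
  moreover have "int (j m t w) + m \<le> K + int t" if "t \<in> {1..N}" "m \<in> {K - int L..<K + int t}" for t m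
  proof -
    have "Inr (m, t) \<in> window_sites K L"
      using that unfolding window_sites_def by (intro UnI2 image_eqI[of _ _ "(t, m)"]) auto
    then show ?thesis using w by (auto simp: site_constraint_def noise_def)
  qed
  ultimately show "w \<in> window_event K L" by (simp add: window_event_def)
qed

lemma prob_window_event_eq_prod:
  "prob (window_event K L) = (1 - b1) ^ N *
     (\<Prod>t\<in>{1..N}. \<Prod>m\<in>{K - int L..<K + int t}. prob {w \<in> space M. j m t w \<le> nat (K + int t - m)})"
proof -
  let ?p = "\<lambda>v. prob (site_constraint K v)"
  let ?S = "SIGMA t:{1..N}. {K - int L..<K + int t}"
  have "prob (window_event K L) = (\<Prod>v\<in>window_sites K L. ?p v)"
    unfolding window_event_eq_INT using window_sites_subset
    by (intro indep_setsD[OF indep_noise_events] finite_window_sites window_sites_nonempty)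
       (auto simp: site_constraint_in_noise_events)
  also have "\<dots> = (\<Prod>t\<in>{1..N}. ?p (Inl (K + int t, t))) * (\<Prod>(t, m)\<in>?S. ?p (Inr (m, t)))"
    unfolding window_sites_def
    by (subst prod.union_disjoint) (auto simp: prod.reindex inj_on_def case_prod_unfold)
  also have "(\<Prod>t\<in>{1..N}. ?p (Inl (K + int t, t))) = (1 - b1) ^ N"
  proof -
    have "?p (Inl (K + int t, t)) = 1 - b1" if "t \<in> {1..N}" for t
      using chi_distr that by (simp add: site_constraint_def noise_def)
    then show ?thesis by simp
  qed
  also have "(\<Prod>(t, m)\<in>?S. ?p (Inr (m, t))) =
      (\<Prod>t\<in>{1..N}. \<Prod>m\<in>{K - int L..<K + int t}. prob {w \<in> space M. j m t w \<le> nat (K + int t - m)})"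
  proof -
    have "(\<Prod>(t, m)\<in>?S. ?p (Inr (m, t))) =
        (\<Prod>t\<in>{1..N}. \<Prod>m\<in>{K - int L..<K + int t}. ?p (Inr (m, t)))"
      by (rule prod.Sigma[symmetric]) auto
    also have "\<dots> = (\<Prod>t\<in>{1..N}. \<Prod>m\<in>{K - int L..<K + int t}.
        prob {w \<in> space M. j m t w \<le> nat (K + int t - m)})"
      by (intro prod.cong refl arg_cong[where f = prob])
         (auto simp: site_constraint_def noise_def)
    finally show ?thesis .
  qed
  finally show ?thesis .
qed

lemma prob_window_event_ge:
  "((1 - b1) * exp (- (b2 / (1 - b2) ^ 2))) ^ N \<le> prob (window_event K L)"
proof -
  have window_column: "exp (- (b2 / (1 - b2) ^ 2)) \<le>
      (\<Prod>m\<in>{K - int L..<K + int t}. prob {w \<in> space M. j m t w \<le> nat (K + int t - m)})"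
    if t: "t \<in> {1..N}" for t
  proof -
    have "exp (- (b2 / (1 - b2) ^ 2)) \<le> (\<Prod>d\<in>{1..L + t}. 1 - b2 ^ d)"
      using b2_pos b2_less_1 by (intro exp_le_prod_one_minus_power) auto
    also have "\<dots> = (\<Prod>m\<in>{K - int L..<K + int t}. 1 - b2 ^ nat (K + int t - m))"
      by (rule prod.reindex_bij_witness[where i = "\<lambda>m. nat (K + int t - m)"
                                          and j = "\<lambda>d. K + int t - int d"]) auto
    also have "\<dots> \<le> (\<Prod>m\<in>{K - int L..<K + int t}. prob {w \<in> space M. j m t w \<le> nat (K + int t - m)})"
      using prob_j_le[OF t] b2_pos b2_less_1 by (intro prod_mono) (simp add: power_le_one)
    finally show ?thesis .
  qed
  have "((1 - b1) * exp (- (b2 / (1 - b2) ^ 2))) ^ N =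
      (1 - b1) ^ N * (\<Prod>t\<in>{1..N}. exp (- (b2 / (1 - b2) ^ 2)))"
    by (simp add: power_mult_distrib)
  also have "\<dots> \<le> (1 - b1) ^ N *
      (\<Prod>t\<in>{1..N}. \<Prod>m\<in>{K - int L..<K + int t}. prob {w \<in> space M. j m t w \<le> nat (K + int t - m)})"
    using window_column b1_less_b2 b2_less_1 by (intro mult_left_mono prod_mono) auto
  also have "\<dots> = prob (window_event K L)"
    by (rule prob_window_event_eq_prod[symmetric])
  finally show ?thesis .
qed

lemma indep_window_events:
  fixes K :: "nat \<Rightarrow> int" and L :: "nat \<Rightarrow> nat"
  assumes disjoint: "disjoint_family (\<lambda>i. {K i - int (L i)..K i + int N})"
  shows "indep_events (\<lambda>i. window_event (K i) (L i)) UNIV"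
proof -
  define J where "J i = {v \<in> sites. case_sum fst fst v \<in> {K i - int (L i)..K i + int N}}" for i
  let ?F = "\<lambda>i. sigma_sets (space M) (\<Union>v\<in>J i. noise_events v)"
  have "indep_sets ?F UNIV"
  proof (rule indep_sets_collect_sigma)
    show "indep_sets noise_events (\<Union>i\<in>UNIV. J i)"
      by (rule indep_sets_mono_index[OF _ indep_noise_events]) (auto simp: J_def)
    show "disjoint_family J"
      using disjoint unfolding disjoint_family_on_def J_def by blast
  qed (rule Int_stable_noise_events)
  then show ?thesis
    unfolding indep_events_def_alt
  proof (rule indep_sets_mono_sets)
    fix i
    have "(\<Union>v\<in>J i. noise_events v) \<subseteq> Pow (space M)"
      unfolding noise_events_def by auto
    then interpret F: sigma_algebra "space M" "?F i"
      by (rule sigma_algebra_sigma_sets)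
    have "site_constraint (K i) v \<in> ?F i" if "v \<in> window_sites (K i) (L i)" for v
    proof (intro sigma_sets.Basic UN_I)
      show "v \<in> J i" using that window_sites_subset unfolding J_def by blast
    qed (rule site_constraint_in_noise_events)
    then have "window_event (K i) (L i) \<in> ?F i"
      unfolding window_event_eq_INT by (intro F.finite_INT finite_window_sites window_sites_nonempty)
    then show "{window_event (K i) (L i)} \<subseteq> ?F i" by simp
  qed
qed

lemma AE_infinite_window_events:
  fixes K :: "nat \<Rightarrow> int" and L :: "nat \<Rightarrow> nat"
  assumes "disjoint_family (\<lambda>i. {K i - int (L i)..K i + int N})"
  shows "AE w in M. infinite {i. w \<in> window_event (K i) (L i)}"
  using b1_less_b2 b2_less_1
  by (intro AE_infinite_indep_events[OF indep_window_events[OF assms] _ prob_window_event_ge]) auto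

definition far_jump_event :: "int \<Rightarrow> nat \<Rightarrow> 'a set" where
  "far_jump_event K L =
     {w \<in> space M. \<exists>t\<in>{1..N}. \<exists>m < K - int L. K + int t < int (j m t w) + m}"

lemma far_jump_event_eq_UN:
  "far_jump_event K L =
     (\<Union>t\<in>{1..N}. \<Union>k. {w \<in> space M. L + 1 + k + t < j (K - int L - 1 - int k) t w})"
proof (intro set_eqI iffI)
  fix w assume "w \<in> far_jump_event K L"
  then obtain t m where "w \<in> space M" "t \<in> {1..N}" "m < K - int L" "K + int t < int (j m t w) + m"
    unfolding far_jump_event_def by blast
  then show "w \<in> (\<Union>t\<in>{1..N}. \<Union>k. {w \<in> space M. L + 1 + k + t < j (K - int L - 1 - int k) t w})"
    by (intro UN_I[of t] UN_I[of "nat (K - int L - 1 - m)"] CollectI conjI) auto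
next
  fix w assume "w \<in> (\<Union>t\<in>{1..N}. \<Union>k. {w \<in> space M. L + 1 + k + t < j (K - int L - 1 - int k) t w})"
  then obtain t k where "w \<in> space M" "t \<in> {1..N}" "L + 1 + k + t < j (K - int L - 1 - int k) t w"
    by blast
  then show "w \<in> far_jump_event K L"
    unfolding far_jump_event_def
    by (intro CollectI conjI bexI[of _ t] exI[of _ "K - int L - 1 - int k"]) auto
qed

lemma far_jump_event_in_events: "far_jump_event K L \<in> events"
  unfolding far_jump_event_eq_UN
  by (intro sets.finite_UN finite_atLeastAtMost sets.countable_UN image_subsetI Collect_j_events)

lemma prob_far_jump_event_le: "prob (far_jump_event K L) \<le> real N * (b2 ^ L / (1 - b2))"
proof -
  let ?G = "\<lambda>t k. {w \<in> space M. L + 1 + k + t < j (K - int L - 1 - int k) t w}"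
  have G_le: "prob (?G t k) \<le> b2 ^ L * b2 ^ k" if t: "t \<in> {1..N}" for t k
  proof -
    have "prob (?G t k) \<le> b2 ^ (L + 1 + k + t)" by (rule prob_j_greater[OF t])
    also have "\<dots> \<le> b2 ^ (L + k)" using b2_pos b2_less_1 by (intro power_decreasing) auto
    finally show ?thesis by (simp add: power_add)
  qed
  have geometric: "summable (\<lambda>k. b2 ^ L * b2 ^ k)"
    using b2_pos b2_less_1 by (intro summable_mult summable_geometric) simp
  have column: "prob (\<Union>k. ?G t k) \<le> b2 ^ L / (1 - b2)" if t: "t \<in> {1..N}" for t
  proof -
    have summable_G: "summable (\<lambda>k. prob (?G t k))"
      by (rule summable_comparison_test'[OF geometric]) (use G_le[OF t] in simp)
    have "prob (\<Union>k. ?G t k) \<le> (\<Sum>k. prob (?G t k))"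
      by (rule finite_measure_subadditive_countably) (use Collect_j_events[OF t] summable_G in auto)
    also have "\<dots> \<le> (\<Sum>k. b2 ^ L * b2 ^ k)"
      by (rule suminf_le[OF _ summable_G geometric]) (use G_le[OF t] in simp)
    also have "\<dots> = b2 ^ L / (1 - b2)"
      using b2_pos b2_less_1 by (simp add: suminf_mult suminf_geometric)
    finally show ?thesis .
  qed
  have "prob (far_jump_event K L) \<le> (\<Sum>t\<in>{1..N}. prob (\<Union>k. ?G t k))"
    unfolding far_jump_event_eq_UN
    by (intro finite_measure_subadditive_finite finite_atLeastAtMost
          sets.countable_UN image_subsetI Collect_j_events)
  also have "\<dots> \<le> (\<Sum>t\<in>{1..N}. b2 ^ L / (1 - b2))"
    by (rule sum_mono) (rule column)
  also have "\<dots> = real N * (b2 ^ L / (1 - b2))"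
    by simp
  finally show ?thesis .
qed

lemma AE_eventually_no_far_jump:
  fixes K :: "nat \<Rightarrow> int" and L :: "nat \<Rightarrow> nat"
  assumes L_ge: "\<And>i. i \<le> L i"
  shows "AE w in M. eventually (\<lambda>i. w \<notin> far_jump_event (K i) (L i)) sequentially"
proof -
  let ?c = "real N / (1 - b2)"
  have prob_le: "prob (far_jump_event (K i) (L i)) \<le> ?c * b2 ^ i" for i
  proof -
    have "b2 ^ L i \<le> b2 ^ i" using b2_pos b2_less_1 L_ge by (intro power_decreasing) auto
    then have "?c * b2 ^ L i \<le> ?c * b2 ^ i"
      using b2_less_1 by (intro mult_left_mono) auto
    then show ?thesis using prob_far_jump_event_le[of "K i" "L i"] by simp
  qed
  have "summable (\<lambda>i. ?c * b2 ^ i)"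
    using b2_pos b2_less_1 by (intro summable_mult summable_geometric) simp
  then have "summable (\<lambda>i. prob (far_jump_event (K i) (L i)))"
    by (rule summable_comparison_test') (use prob_le in simp)
  then have "AE w in M. eventually (\<lambda>i. w \<in> space M - far_jump_event (K i) (L i)) sequentially"
    by (intro borel_cantelli_AE1 far_jump_event_in_events) (auto simp: less_top[symmetric])
  then show ?thesis by (rule AE_mp[OF _ AE_I2]) (auto elim: eventually_mono)
qed

lemma separating_if_window_and_no_far_jump:
  assumes "w \<in> window_event K L" and "w \<notin> far_jump_event K L"
  shows "separating N chi j w K"
  unfolding separating_def
proof (intro ballI conjI allI impI)
  fix t assume t: "t \<in> {1..N}"
  then show "chi (K + int t) t w = 0"
    using assms(1) unfolding window_event_def by blast
  fix m assume m: "m < K + int t"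
  show "int (j m t w) + m \<le> K + int t"
  proof (cases "m < K - int L")
    case True
    have "w \<in> space M" using assms(1) unfolding window_event_def by blast
    then show ?thesis using assms(2) t True unfolding far_jump_event_def by force
  next
    case False
    then show ?thesis using assms(1) t m unfolding window_event_def by auto
  qed
qed

lemma AE_infinite_separating:
  fixes K :: "nat \<Rightarrow> int" and L :: "nat \<Rightarrow> nat"
  assumes "disjoint_family (\<lambda>i. {K i - int (L i)..K i + int N})" and "\<And>i. i \<le> L i"
  shows "AE w in M. infinite {i. separating N chi j w (K i)}"
  using AE_infinite_window_events[OF assms(1)] AE_eventually_no_far_jump[where K = K, OF assms(2)]
proof eventually_elim
  case (elim w)
  then obtain n where n: "\<And>i. i \<ge> n \<Longrightarrow> w \<notin> far_jump_event (K i) (L i)"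
    by (auto simp: eventually_sequentially)
  have "{i. w \<in> window_event (K i) (L i)} - {..<n} \<subseteq> {i. separating N chi j w (K i)}"
    using n separating_if_window_and_no_far_jump by auto
  moreover have "infinite ({i. w \<in> window_event (K i) (L i)} - {..<n})"
    using elim(1) by auto
  ultimately show ?case using finite_subset by blast
qed


lemma AE_separating_unbounded_above:
  "AE w in M. \<forall>b. \<exists>k\<in>{k. separating N chi j w k}. b < k"
proof -
  define K where "K i = int i * (int i + int N) + int i" for i :: nat
  have "disjoint_family (\<lambda>i. {K i - int i..K i + int N})"
    using disjoint_family_quadratic_windows[of N] by (simp add: K_def add.assoc)
  from AE_infinite_separating[OF this le_refl] show ?thesis
  proof eventually_elim
    case (elim w)
    show ?case
    proof
      fix b :: int
      obtain i where i: "nat b + 1 \<le> i" "separating N chi j w (K i)"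
        using elim by (auto simp: infinite_nat_iff_unbounded_le)
      have "b < K i" using i(1) unfolding K_def by (simp add: add_strict_increasing2)
      with i(2) show "\<exists>k\<in>{k. separating N chi j w k}. b < k" by (intro bexI[of _ "K i"]) simp_all
    qed
  qed
qed

lemma AE_separating_unbounded_below:
  "AE w in M. \<forall>b. \<exists>k\<in>{k. separating N chi j w k}. k < b"
proof -
  define K where "K i = - (int i * (int i + int N) + int N)" for i :: nat
  have "inj (uminus :: int \<Rightarrow> int)" by (simp add: inj_def)
  moreover have "{K i - int i..K i + int N} =
      uminus ` {int i * (int i + int N)..int i * (int i + int N) + int i + int N}" for i
    by (simp add: K_def)
  ultimately have "disjoint_family (\<lambda>i. {K i - int i..K i + int N})"
    using disjoint_family_quadratic_windows[of N] unfolding disjoint_family_on_def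
    by (metis image_Int image_empty)
  from AE_infinite_separating[OF this le_refl] show ?thesis
  proof eventually_elim
    case (elim w)
    show ?case
    proof
      fix b :: int
      obtain i where i: "nat (- b) + 1 \<le> i" "separating N chi j w (K i)"
        using elim by (auto simp: infinite_nat_iff_unbounded_le)
      have "int i \<le> int i * (int i + int N)"
        using mult_left_mono[of 1 "int i + int N" "int i"] N_pos by simp
      then have "K i < b" using i(1) unfolding K_def by linarith
      with i(2) show "\<exists>k\<in>{k. separating N chi j w k}. k < b" by (intro bexI[of _ "K i"]) simp_all
    qed
  qed
qed
end

theorem lemma2p3:
  fixes M :: "'a measure" and b1 b2 :: real and N :: nat
    and chi j :: "int \<Rightarrow> nat \<Rightarrow> 'a \<Rightarrow> nat"
  assumes "prob_space M"
    and "0 < b1" and "b1 < b2" and "b2 < 1" and "N \<ge> 1"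
    and "prob_space.indep_vars M (\<lambda>_. count_space UNIV)
           (case_sum (\<lambda>(x, t). chi x t) (\<lambda>(x, t). j x t))
           ((UNIV \<times> {1..N}) <+> (UNIV \<times> {1..N}))"
    and "\<forall>x. \<forall>t\<in>{1..N}. measure M {w \<in> space M. chi x t w = 1} = b1
                       \<and> measure M {w \<in> space M. chi x t w = 0} = 1 - b1"
    and "\<forall>x. \<forall>t\<in>{1..N}. \<forall>r::nat. r \<ge> 1 \<longrightarrow>
           measure M {w \<in> space M. j x t w = r} = (1 - b2) * b2 ^ (r - 1)"
  shows "AE w in M. \<exists>R :: int \<Rightarrow> int. strict_mono R \<and> (\<forall>i. separating N chi j w (R i))"
proof -
  interpret separation_model M b1 b2 N chi j
    using assms by (simp add: separation_model_def separation_model_axioms_def)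
  from AE_separating_unbounded_above AE_separating_unbounded_below show ?thesis
  proof eventually_elim
    case (elim w)
    from strict_mono_int_enumeration[OF elim[THEN spec]] show ?case by auto
  qed
qed

end
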